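(* A reaction network $(X,\mathscr{R})$ admits an sf-instance if and only if it is conservative.
   Context: A reaction network (RN) $(X,\mathscr{R})$ consists of a finite non-empty set $X$ of species and a finite non-empty set $\mathscr{R}$ of reactions. Each reaction $r$ is given by stoichiometric coefficients $s^-_{xr},s^+_{xr}\in\mathbb{N}_0$. The stoichiometric matrix $S\in\mathbb{Z}^{X\times\mathscr{R}}$ has entries $S_{xr}=s^+_{xr}-s^-_{xr}$. The paper assumes throughout that RNs are closed: every reaction $r$ has $x,y$ with $S_{xr}<0<S_{yr}$. The RN is conservative if there is $m\in\mathbb{R}^X$ with all entries positive and $m^\top S=0$. A sum formula instance (sf-instance) is a matrix $A\in\mathbb{N}_0^{\mathcal{A}\times X}$, for some non-empty finite set $\mathcal{A}$ of "atoms", such that: - (i) every column of $A$ is nonzero; - (ii) $AS=0$. *)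

theory Defs
  imports Complex_Main
begin

text \<open>A reaction network: species set X, reaction set R (both finite, non-empty),
  stoichiometric coefficients sm (reactant side) and sp (product side).\<close>

definition stoich :: "('x \<Rightarrow> 'r \<Rightarrow> nat) \<Rightarrow> ('x \<Rightarrow> 'r \<Rightarrow> nat) \<Rightarrow> 'x \<Rightarrow> 'r \<Rightarrow> int" where
  "stoich sm sp x r = int (sp x r) - int (sm x r)"

definition reaction_network :: "'x set \<Rightarrow> 'r set \<Rightarrow> bool" where
  "reaction_network X R \<longleftrightarrow> finite X \<and> X \<noteq> {} \<and> finite R \<and> R \<noteq> {}"

definition closed_RN :: "'x set \<Rightarrow> 'r set \<Rightarrow> ('x \<Rightarrow> 'r \<Rightarrow> nat) \<Rightarrow> ('x \<Rightarrow> 'r \<Rightarrow> nat) \<Rightarrow> bool" where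
  "closed_RN X R sm sp \<longleftrightarrow>
     (\<forall>r\<in>R. \<exists>x\<in>X. \<exists>y\<in>X. stoich sm sp x r < 0 \<and> 0 < stoich sm sp y r)"

definition conservative :: "'x set \<Rightarrow> 'r set \<Rightarrow> ('x \<Rightarrow> 'r \<Rightarrow> nat) \<Rightarrow> ('x \<Rightarrow> 'r \<Rightarrow> nat) \<Rightarrow> bool" where
  "conservative X R sm sp \<longleftrightarrow>
     (\<exists>m :: 'x \<Rightarrow> real. (\<forall>x\<in>X. 0 < m x) \<and>
        (\<forall>r\<in>R. (\<Sum>x\<in>X. m x * of_int (stoich sm sp x r)) = 0))"

definition sf_instance :: "'x set \<Rightarrow> 'r set \<Rightarrow> ('x \<Rightarrow> 'r \<Rightarrow> nat) \<Rightarrow> ('x \<Rightarrow> 'r \<Rightarrow> nat)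
    \<Rightarrow> 'a set \<Rightarrow> ('a \<Rightarrow> 'x \<Rightarrow> nat) \<Rightarrow> bool" where
  "sf_instance X R sm sp Atoms A \<longleftrightarrow>
     finite Atoms \<and> Atoms \<noteq> {} \<and>
     (\<forall>x\<in>X. \<exists>a\<in>Atoms. A a x \<noteq> 0) \<and>
     (\<forall>a\<in>Atoms. \<forall>r\<in>R. (\<Sum>x\<in>X. int (A a x) * stoich sm sp x r) = 0)"

text \<open>Admitting an sf-instance; atoms are taken from nat (any finite atom set can be
  relabelled injectively into nat).\<close>

definition admits_sf_instance :: "'x set \<Rightarrow> 'r set \<Rightarrow> ('x \<Rightarrow> 'r \<Rightarrow> nat) \<Rightarrow> ('x \<Rightarrow> 'r \<Rightarrow> nat) \<Rightarrow> bool" where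
  "admits_sf_instance X R sm sp \<longleftrightarrow> (\<exists>(Atoms :: nat set) A. sf_instance X R sm sp Atoms A)"

end

theory Submission
  imports Defs "HOL-Analysis.Analysis"
begin

text \<open>The column sums of an sf-instance form a positive conservation law. Conversely, a positive
  conservation law is a real point of the set cut out by the integer equations \<open>m\<^sup>T S = 0\<close> and
  the open conditions \<open>m > 0\<close>. Eliminating one variable per equation reduces the search for a
  rational point of this set to the case without equations, where density of \<open>\<rat>\<close> suffices.
  Clearing denominators of a rational point gives a positive integer conservation law, which is
  an sf-instance with a single atom.\<close>

definition dot_on :: "'x set \<Rightarrow> ('x \<Rightarrow> real) \<Rightarrow> ('x \<Rightarrow> real) \<Rightarrow> real" where
  "dot_on X m c = (\<Sum>x\<in>X. m x * c x)"

lemma dot_on_diff_scaled: "dot_on X m (\<lambda>x. c x - k * d x) = dot_on X m c - k * dot_on X m d"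
  unfolding dot_on_def by (simp add: algebra_simps sum_subtractf sum_distrib_left)

lemma dot_on_upd:
  assumes "finite X" "x0 \<in> X"
  shows "dot_on X (m(x0 := v)) c = dot_on X m c + (v - m x0) * c x0"
  using assms unfolding dot_on_def by (simp add: sum.remove algebra_simps)

lemma rational_approx_strict_ineqs:
  assumes "finite X" "finite G" "\<forall>g\<in>G. 0 < dot_on X m g"
  shows "\<exists>q. (\<forall>x\<in>X. q x \<in> \<rat>) \<and> (\<forall>g\<in>G. 0 < dot_on X q g)"
proof -
  have "\<exists>s. (\<forall>n. s n \<in> \<rat>) \<and> s \<longlonglongrightarrow> m x" for x
    using closure_sequential[of "m x" \<rat>] by (simp add: Rats_closure_real)
  then obtain s where s: "\<And>x n. s x n \<in> \<rat>" "\<And>x. s x \<longlonglongrightarrow> m x" by metis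
  have "(\<lambda>n. dot_on X (\<lambda>x. s x n) g) \<longlonglongrightarrow> dot_on X m g" for g
    unfolding dot_on_def by (intro tendsto_intros s(2))
  then have "\<forall>\<^sub>F n in sequentially. \<forall>g\<in>G. 0 < dot_on X (\<lambda>x. s x n) g"
    using assms by (auto intro!: eventually_ball_finite order_tendstoD)
  then obtain n where "\<forall>g\<in>G. 0 < dot_on X (\<lambda>x. s x n) g"
    using eventually_happens'[OF sequentially_bot] by blast
  with s(1) show ?thesis by (intro exI[of _ "\<lambda>x. s x n"]) simp
qed

definition eliminate :: "'x \<Rightarrow> ('x \<Rightarrow> real) \<Rightarrow> ('x \<Rightarrow> real) \<Rightarrow> 'x \<Rightarrow> real" where
  "eliminate i a c = (\<lambda>x. c x - c i / a i * a x)"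

lemma dot_on_eliminate:
  assumes "dot_on X m a = 0"
  shows "dot_on X m (eliminate i a c) = dot_on X m c"
  using assms dot_on_diff_scaled[of X m c "c i / a i" a] unfolding eliminate_def by simp

lemma solve_for_coordinate:
  assumes "finite X" "\<forall>x\<in>X. a x \<in> \<rat>" "\<forall>x\<in>X. q x \<in> \<rat>"
    and "i \<in> X" "a i \<noteq> 0"
  obtains q' where "\<forall>x\<in>X. q' x \<in> \<rat>" "dot_on X q' a = 0"
    "\<And>c. dot_on X q' c = dot_on X q (eliminate i a c)"
proof
  define q' where "q' = q(i := q i - dot_on X q a / a i)"
  have "dot_on X q a \<in> \<rat>"
    unfolding dot_on_def using assms(2,3) by (intro Rats_sum Rats_mult) auto
  then show "\<forall>x\<in>X. q' x \<in> \<rat>"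
    unfolding q'_def using assms by auto
  show a: "dot_on X q' a = 0"
    unfolding q'_def using assms by (simp add: dot_on_upd)
  fix c
  have "dot_on X q' c = dot_on X q' (eliminate i a c)"
    using a by (simp add: dot_on_eliminate)
  also have "\<dots> = dot_on X q (eliminate i a c)"
    unfolding q'_def eliminate_def using assms by (simp add: dot_on_upd)
  finally show "dot_on X q' c = dot_on X q (eliminate i a c)" .
qed

lemma rational_point_of_rational_equations_strict_ineqs:
  assumes "finite X" "finite E" "finite G"
    and "\<forall>c\<in>E. \<forall>x\<in>X. c x \<in> \<rat>"
    and "\<forall>c\<in>E. dot_on X m c = 0" "\<forall>g\<in>G. 0 < dot_on X m g"
  shows "\<exists>q. (\<forall>x\<in>X. q x \<in> \<rat>) \<and> (\<forall>c\<in>E. dot_on X q c = 0) \<and> (\<forall>g\<in>G. 0 < dot_on X q g)"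
  using assms(2-)
proof (induction "card E" arbitrary: E G rule: less_induct)
  case less
  show ?case
  proof (cases "E = {}")
    case True
    then show ?thesis using rational_approx_strict_ineqs[OF \<open>finite X\<close>] less.prems by simp
  next
    case False
    then obtain a where a: "a \<in> E" by blast
    have smaller: "card (E - {a}) < card E"
      using less.prems(1) a by (rule card_Diff1_less)
    show ?thesis
    proof (cases "\<forall>x\<in>X. a x = 0")
      case True
      then have "dot_on X q a = 0" for q unfolding dot_on_def by simp
      moreover obtain q where "(\<forall>x\<in>X. q x \<in> \<rat>) \<and> (\<forall>c\<in>E - {a}. dot_on X q c = 0)
          \<and> (\<forall>g\<in>G. 0 < dot_on X q g)"
        using less.hyps[OF smaller, of G] less.prems by auto
      ultimately show ?thesis by blast
    next
      case False
      then obtain i where i: "i \<in> X" "a i \<noteq> 0" by blast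
      let ?elim = "eliminate i a"
      have "card (?elim ` (E - {a})) < card E"
        using smaller card_image_le less.prems(1) by (meson finite_Diff le_less_trans)
      moreover have "\<forall>c\<in>?elim ` (E - {a}). \<forall>x\<in>X. c x \<in> \<rat>"
        using less.prems(3) a i(1) unfolding eliminate_def by auto
      moreover have "dot_on X m (?elim c) = dot_on X m c" for c
        using a less.prems(4) by (simp add: dot_on_eliminate)
      ultimately obtain q where q: "\<forall>x\<in>X. q x \<in> \<rat>"
        and q_eq: "\<forall>c\<in>E - {a}. dot_on X q (?elim c) = 0"
        and q_ineq: "\<forall>g\<in>G. 0 < dot_on X q (?elim g)"
        using less.hyps[of "?elim ` (E - {a})" "?elim ` G"] less.prems by auto
      obtain q' where q': "\<forall>x\<in>X. q' x \<in> \<rat>" "dot_on X q' a = 0"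
        "\<And>c. dot_on X q' c = dot_on X q (?elim c)"
        using solve_for_coordinate[OF \<open>finite X\<close> bspec[OF less.prems(3) a] q i] by blast
      have "\<forall>c\<in>E. dot_on X q' c = 0"
        using q'(2,3) q_eq by (metis insert_Diff insert_iff a)
      then show ?thesis using q' q_ineq by auto
    qed
  qed
qed

lemma common_denominator:
  assumes "finite X" "\<forall>x\<in>X. q x \<in> \<rat>"
  shows "\<exists>d::nat. 0 < d \<and> (\<forall>x\<in>X. real d * q x \<in> \<int>)"
  using assms
proof (induction X rule: finite_induct)
  case empty
  show ?case by (intro exI[of _ 1]) simp
next
  case (insert y X)
  then obtain d where d: "0 < d" "\<forall>x\<in>X. real d * q x \<in> \<int>" by auto
  have "q y \<in> \<rat>" using insert.prems by simp
  then obtain a n where y: "q y = real_of_int a / real n" "n \<noteq> 0"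
    unfolding Rats_eq_int_div_nat by blast
  have "real (d * n) * q x \<in> \<int>" if "x \<in> insert y X" for x
  proof (cases "x = y")
    case True
    have "real (d * n) * q y = of_int (int d * a)" using y by simp
    then show ?thesis using True by (metis Ints_of_int)
  next
    case False
    have "real (d * n) * q x = of_nat n * (real d * q x)" by simp
    then show ?thesis using False that d(2) by (metis Ints_mult Ints_of_nat insertE)
  qed
  with d(1) y(2) show ?case by (intro exI[of _ "d * n"]) auto
qed

lemma positive_rational_left_kernel:
  fixes m :: "'x \<Rightarrow> real" and S :: "'x \<Rightarrow> 'r \<Rightarrow> int"
  assumes "finite X" "finite R"
    and "\<forall>x\<in>X. 0 < m x" "\<forall>r\<in>R. (\<Sum>x\<in>X. m x * of_int (S x r)) = 0"
  shows "\<exists>q :: 'x \<Rightarrow> real. (\<forall>x\<in>X. q x \<in> \<rat> \<and> 0 < q x) \<and> (\<forall>r\<in>R. (\<Sum>x\<in>X. q x * of_int (S x r)) = 0)"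
proof -
  define col where "col r = (\<lambda>x. real_of_int (S x r))" for r
  define basis where "basis y = (\<lambda>x. if x = y then 1 else 0 :: real)" for y :: 'x
  have dot_col: "dot_on X q (col r) = (\<Sum>x\<in>X. q x * of_int (S x r))" for q r
    unfolding dot_on_def col_def ..
  have dot_basis: "dot_on X q (basis y) = q y" if "y \<in> X" for q y
    unfolding dot_on_def basis_def using \<open>finite X\<close> that by (simp add: if_distrib cong: if_cong)
  have "\<forall>c\<in>col ` R. \<forall>x\<in>X. c x \<in> \<rat>"
    unfolding col_def by auto
  moreover have "\<forall>c\<in>col ` R. dot_on X m c = 0"
    using assms(4) dot_col by auto
  moreover have "\<forall>g\<in>basis ` X. 0 < dot_on X m g"
    using assms(3) dot_basis by auto
  ultimately have "\<exists>q. (\<forall>x\<in>X. q x \<in> \<rat>) \<and> (\<forall>c\<in>col ` R. dot_on X q c = 0)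
      \<and> (\<forall>g\<in>basis ` X. 0 < dot_on X q g)"
    by (rule rational_point_of_rational_equations_strict_ineqs[OF \<open>finite X\<close>
          finite_imageI[OF \<open>finite R\<close>] finite_imageI[OF \<open>finite X\<close>]])
  then obtain q where q: "\<forall>x\<in>X. q x \<in> \<rat>" "\<forall>c\<in>col ` R. dot_on X q c = 0"
      "\<forall>g\<in>basis ` X. 0 < dot_on X q g"
    by blast
  have "0 < q x" if "x \<in> X" for x
    using bspec[OF q(3) imageI[OF that]] dot_basis[OF that] by simp
  moreover have "(\<Sum>x\<in>X. q x * of_int (S x r)) = 0" if "r \<in> R" for r
    using bspec[OF q(2) imageI[OF that]] dot_col[of q r] by simp
  ultimately show ?thesis using q(1) by blast
qed

lemma positive_nat_left_kernel:
  fixes m :: "'x \<Rightarrow> real" and S :: "'x \<Rightarrow> 'r \<Rightarrow> int"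
  assumes "finite X" "finite R"
    and "\<forall>x\<in>X. 0 < m x" "\<forall>r\<in>R. (\<Sum>x\<in>X. m x * of_int (S x r)) = 0"
  shows "\<exists>N :: 'x \<Rightarrow> nat. (\<forall>x\<in>X. 0 < N x) \<and> (\<forall>r\<in>R. (\<Sum>x\<in>X. int (N x) * S x r) = 0)"
proof -
  obtain q :: "'x \<Rightarrow> real" where q: "\<forall>x\<in>X. q x \<in> \<rat> \<and> 0 < q x" "\<forall>r\<in>R. (\<Sum>x\<in>X. q x * of_int (S x r)) = 0"
    using positive_rational_left_kernel[OF assms] by blast
  obtain d :: nat where d: "0 < d" "\<forall>x\<in>X. real d * q x \<in> \<int>"
    using common_denominator[OF \<open>finite X\<close>] q(1) by blast
  define N where "N x = nat \<lfloor>real d * q x\<rfloor>" for x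
  have N: "real (N x) = real d * q x" if "x \<in> X" for x
    using d(2) that q(1) unfolding N_def by (auto elim!: Ints_cases)
  have "0 < N x" if "x \<in> X" for x
  proof -
    have "0 < real (N x)" using N[OF that] d(1) q(1) that by simp
    then show ?thesis by simp
  qed
  moreover have "(\<Sum>x\<in>X. int (N x) * S x r) = 0" if "r \<in> R" for r
  proof -
    have "real_of_int (\<Sum>x\<in>X. int (N x) * S x r) = real d * (\<Sum>x\<in>X. q x * of_int (S x r))"
      by (simp add: N sum_distrib_left mult.assoc)
    also have "\<dots> = 0" using q(2) that by simp
    finally show ?thesis by (rule of_int_eq_0_iff[THEN iffD1])
  qed
  ultimately show ?thesis by blast
qed

lemma sf_instance_imp_conservative:
  assumes "sf_instance X R sm sp Atoms A"
  shows "conservative X R sm sp"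
proof -
  have fin: "finite Atoms" and cover: "\<forall>x\<in>X. \<exists>a\<in>Atoms. A a x \<noteq> 0"
    and balance: "\<forall>a\<in>Atoms. \<forall>r\<in>R. (\<Sum>x\<in>X. int (A a x) * stoich sm sp x r) = 0"
    using assms unfolding sf_instance_def by blast+
  define m where "m x = (\<Sum>a\<in>Atoms. real (A a x))" for x
  have "0 < m x" if "x \<in> X" for x
    using cover that fin unfolding m_def by (force intro: sum_pos2)
  moreover have "(\<Sum>x\<in>X. m x * of_int (stoich sm sp x r)) = 0" if "r \<in> R" for r
  proof -
    have "(\<Sum>x\<in>X. m x * of_int (stoich sm sp x r))
        = (\<Sum>a\<in>Atoms. real_of_int (\<Sum>x\<in>X. int (A a x) * stoich sm sp x r))"
      unfolding m_def by (simp add: sum_distrib_right sum.swap[of _ X Atoms])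
    then show ?thesis using balance that by simp
  qed
  ultimately show ?thesis unfolding conservative_def by blast
qed

theorem proposition8:
  fixes X :: "'x set" and R :: "'r set" and sm sp :: "'x \<Rightarrow> 'r \<Rightarrow> nat"
  assumes "reaction_network X R"
    and "closed_RN X R sm sp"
  shows "admits_sf_instance X R sm sp \<longleftrightarrow> conservative X R sm sp"
proof
  assume "admits_sf_instance X R sm sp"
  then show "conservative X R sm sp"
    unfolding admits_sf_instance_def using sf_instance_imp_conservative by blast
next
  assume "conservative X R sm sp"
  then obtain m :: "'x \<Rightarrow> real" where m: "\<forall>x\<in>X. 0 < m x"
      "\<forall>r\<in>R. (\<Sum>x\<in>X. m x * of_int (stoich sm sp x r)) = 0"
    unfolding conservative_def by blast
  have "finite X" "finite R"
    using assms(1) unfolding reaction_network_def by auto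
  then obtain N :: "'x \<Rightarrow> nat" where "\<forall>x\<in>X. 0 < N x"
      "\<forall>r\<in>R. (\<Sum>x\<in>X. int (N x) * stoich sm sp x r) = 0"
    using positive_nat_left_kernel[OF _ _ m] by blast
  then have "sf_instance X R sm sp {0::nat} (\<lambda>_ x. N x)"
    unfolding sf_instance_def by auto
  then show "admits_sf_instance X R sm sp"
    unfolding admits_sf_instance_def by blast
qed

end
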